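(* For all $b\in(0,\pi/2)$, $\pi^2\frac{I_1(b)}{I_2(b)^3}<2$, where $I_1(b)=\int_{-b}^{b}\frac{\cos^5\varphi}{\sqrt{\cos^4\varphi-\cos^4b}}\,d\varphi$ and $I_2(b)=\int_{-b}^{b}\frac{\cos^3\varphi}{\sqrt{\cos^4\varphi-\cos^4b}}\,d\varphi$. *)

theory Defs
  imports "HOL-Analysis.Analysis"
begin

definition I1 :: "real \<Rightarrow> real" where
  "I1 b = (LBINT \<phi>=-b..b. cos \<phi> ^ 5 / sqrt (cos \<phi> ^ 4 - cos b ^ 4))"

definition I2 :: "real \<Rightarrow> real" where
  "I2 b = (LBINT \<phi>=-b..b. cos \<phi> ^ 3 / sqrt (cos \<phi> ^ 4 - cos b ^ 4))"

end

theory Submission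
  imports Defs
begin

(* 1. The substitution sin phi = sin b * sin theta removes the singularity at phi = +-b and gives
        I2 b = J 1 e,  I1 b = J 2 e,  where e = sin b ^ 2 and
        J n e = integral over [-pi/2, pi/2] of W^n / sqrt U,  W = 1 - e sin^2,  U = W + (1 - e).
   2. Polynomials in sin^2 are integrated exactly with the Wallis integrals.
   3. Lower bound for J 1: AM-GM gives 3 l^2 W q <= 2 l^3 W / sqrt U + W U q^3 with q = 1 + e sin^2;
      integrating and optimising in l yields pi^2 A^3 <= C J1^2 for explicit polynomials A, C.
   4. Upper bound for J 2: 2 m W^2 / sqrt U <= m^2 W^2 + W^2 / U, and W^2 / U lies below its chord;
      integrating and optimising in m yields J2^2 <= pi^2 P B.
   5. The polynomial inequality P B C^3 < 4 A^9 on (0, 1) (a Bernstein certificate) combines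
      the bounds to pi^2 J2 < 2 J1^3, which is the theorem. *)

(* The normalised integrals J n e over a half period.  For e = sin b ^ 2 the substitution
   sin phi = sin b * sin theta turns I2 b into J 1 e and I1 b into J 2 e. *)
definition J :: "nat \<Rightarrow> real \<Rightarrow> real" where
  "J n e = integral {-(pi/2)..pi/2} (\<lambda>\<theta>. (1 - e * sin \<theta>^2) ^ n / sqrt (2 - e - e * sin \<theta>^2))"

lemma sin_sq_bounds: "0 \<le> sin x ^ 2" "sin x ^ 2 \<le> (1::real)"
  by (simp_all add: abs_square_le_1)

lemma weight_bounds:
  fixes e x :: real
  assumes "0 < e" "e < 1"
  shows "1 - e \<le> 1 - e * sin x^2" "1 - e * sin x^2 \<le> 1" "0 < 2 - e - e * sin x^2"
proof -
  have "e * sin x^2 \<le> e" using assms sin_sq_bounds(2)[of x] by (simp add: mult_left_le)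
  then show "1 - e \<le> 1 - e * sin x^2" "0 < 2 - e - e * sin x^2" using assms by linarith+
  show "1 - e * sin x^2 \<le> 1" using assms by simp
qed

lemma J_integrand_continuous:
  fixes e :: real
  assumes "0 < e" "e < 1"
  shows "continuous_on A (\<lambda>\<theta>. (1 - e * sin \<theta>^2) ^ n / sqrt (2 - e - e * sin \<theta>^2))"
  using weight_bounds(3)[OF assms] by (intro continuous_intros) (auto simp: less_imp_neq[symmetric])

lemma J_has_integral:
  fixes e :: real
  assumes "0 < e" "e < 1"
  shows "((\<lambda>\<theta>. (1 - e * sin \<theta>^2) ^ n / sqrt (2 - e - e * sin \<theta>^2)) has_integral J n e)
           {-(pi/2)..pi/2}"
  unfolding J_def
  by (intro integrable_integral integrable_continuous_interval J_integrand_continuous[OF assms])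

(* The same integral as a Lebesgue interval integral, the form produced by the change of
   variables theorem. *)
lemma J_interval_integral:
  fixes e :: real
  assumes "0 < e" "e < 1"
  shows "set_integrable lborel (einterval (-pi/2) (pi/2))
           (\<lambda>\<theta>. (1 - e * sin \<theta>^2) ^ n / sqrt (2 - e - e * sin \<theta>^2))"
    and "(LBINT \<theta>=-pi/2..pi/2. (1 - e * sin \<theta>^2) ^ n / sqrt (2 - e - e * sin \<theta>^2)) = J n e"
proof -
  have integrable: "set_integrable lborel {-(pi/2)..pi/2}
                      (\<lambda>\<theta>. (1 - e * sin \<theta>^2) ^ n / sqrt (2 - e - e * sin \<theta>^2))"
    by (intro borel_integrable_atLeastAtMost' J_integrand_continuous[OF assms])
  then show "set_integrable lborel (einterval (-pi/2) (pi/2))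
               (\<lambda>\<theta>. (1 - e * sin \<theta>^2) ^ n / sqrt (2 - e - e * sin \<theta>^2))"
    by (rule set_integrable_subset) auto
  show "(LBINT \<theta>=-pi/2..pi/2. (1 - e * sin \<theta>^2) ^ n / sqrt (2 - e - e * sin \<theta>^2)) = J n e"
    using interval_integral_eq_integral[OF _ integrable] unfolding J_def by simp
qed

(* Along phi = arcsin (a sin theta), 0 < a < 1, we have cos phi = sqrt W and the radicand
   cos phi ^ 4 - (1 - a^2)^2 factors as (a cos theta)^2 * U, where W, U are as for e = a^2.
   With a = sin b, (1 - a^2)^2 = cos b ^ 4. *)
lemma arcsin_scaled_sin:
  fixes a \<theta> :: real
  assumes "0 < a" "a < 1"
  shows "cos (arcsin (a * sin \<theta>)) = sqrt (1 - a^2 * sin \<theta>^2)"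
    and "cos (arcsin (a * sin \<theta>)) ^ 4 - (1 - a^2)^2
           = (a * cos \<theta>)^2 * (2 - a^2 - a^2 * sin \<theta>^2)"
proof -
  have "\<bar>a * sin \<theta>\<bar> \<le> 1"
    using assms abs_sin_le_one[of \<theta>] by (simp add: abs_mult mult_le_one)
  then show cos_eq: "cos (arcsin (a * sin \<theta>)) = sqrt (1 - a^2 * sin \<theta>^2)"
    by (simp add: cos_arcsin abs_le_iff power_mult_distrib)
  have "a^2 * sin \<theta>^2 \<le> 1"
    using assms sin_sq_bounds[of \<theta>] by (intro mult_le_one) (auto simp: power_le_one)
  then have "0 \<le> 1 - a^2 * sin \<theta>^2" by simp
  then have "cos (arcsin (a * sin \<theta>)) ^ 4 = (1 - a^2 * sin \<theta>^2)^2"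
    unfolding cos_eq by (metis power_mult[of _ 2 2] real_sqrt_pow2 num_double numeral_times_numeral)
  then show "cos (arcsin (a * sin \<theta>)) ^ 4 - (1 - a^2)^2
           = (a * cos \<theta>)^2 * (2 - a^2 - a^2 * sin \<theta>^2)"
    using sin_cos_squared_add[of \<theta>] by algebra
qed

lemma arcsin_scaled_sin_pos:
  fixes a \<theta> :: real
  assumes a: "0 < a" "a < 1"
  shows "0 < 1 - (a * sin \<theta>)^2"
    and "0 \<le> cos (arcsin (a * sin \<theta>))"
    and "-pi/2 < \<theta> \<Longrightarrow> \<theta> < pi/2 \<Longrightarrow> 0 < cos (arcsin (a * sin \<theta>)) ^ 4 - (1 - a^2)^2"
proof -
  have e: "0 < a^2" "a^2 < 1" using a by (simp_all add: power_less_one_iff)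
  show jac: "0 < 1 - (a * sin \<theta>)^2"
    using weight_bounds(1)[OF e, of \<theta>] e unfolding power_mult_distrib by linarith
  then show "0 \<le> cos (arcsin (a * sin \<theta>))"
    unfolding arcsin_scaled_sin(1)[OF a] by (simp add: power_mult_distrib)
  assume "-pi/2 < \<theta>" "\<theta> < pi/2"
  then have "0 < cos \<theta>" by (intro cos_gt_zero_pi) auto
  then show "0 < cos (arcsin (a * sin \<theta>)) ^ 4 - (1 - a^2)^2"
    unfolding arcsin_scaled_sin(2)[OF a] using weight_bounds(3)[OF e, of \<theta>] a by simp
qed

(* Pointwise effect of the substitution: the pulled-back integrand times the Jacobian is the
   integrand of J n (a^2); the factors a cos theta and sqrt W cancel. *)
lemma arcsin_substitution_integrand:
  fixes a \<theta> :: real and n :: nat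
  assumes a: "0 < a" "a < 1" and \<theta>: "-pi/2 < \<theta>" "\<theta> < pi/2"
  shows "cos (arcsin (a * sin \<theta>)) ^ (2*n+1) / sqrt (cos (arcsin (a * sin \<theta>)) ^ 4 - (1 - a^2)^2)
           * (a * cos \<theta> / sqrt (1 - (a * sin \<theta>)^2))
         = (1 - a^2 * sin \<theta>^2) ^ n / sqrt (2 - a^2 - a^2 * sin \<theta>^2)"
proof -
  define W where "W = 1 - a^2 * sin \<theta>^2"
  define U where "U = 2 - a^2 - a^2 * sin \<theta>^2"
  have "0 < a^2" "a^2 < 1" using a by (simp_all add: power_less_one_iff)
  from weight_bounds[OF this, of \<theta>] this have W0: "0 < W" and U0: "0 < U"
    unfolding W_def U_def by linarith+
  have c0: "0 < cos \<theta>" using \<theta> by (intro cos_gt_zero_pi) auto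
  have num: "cos (arcsin (a * sin \<theta>)) ^ (2*n+1) = W ^ n * sqrt W"
    using W0 unfolding arcsin_scaled_sin[OF a] W_def by (simp add: power_add power_mult)
  have den: "sqrt (cos (arcsin (a * sin \<theta>)) ^ 4 - (1 - a^2)^2) = a * cos \<theta> * sqrt U"
    unfolding arcsin_scaled_sin(2)[OF a] U_def using a c0 by (simp add: real_sqrt_mult)
  have jac: "sqrt (1 - (a * sin \<theta>)^2) = sqrt W"
    unfolding W_def by (simp add: power_mult_distrib)
  show ?thesis
    unfolding num den jac W_def[symmetric] U_def[symmetric] using a c0 W0 U0 by (simp add: field_simps)
qed

lemma arcsin_scaled_sin_deriv:
  fixes a \<theta> :: real
  assumes "0 < a" "a < 1"
  shows "((\<lambda>\<theta>. arcsin (a * sin \<theta>)) has_real_derivative a * cos \<theta> / sqrt (1 - (a * sin \<theta>)^2))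
           (at \<theta>)"
proof -
  have "(arcsin has_real_derivative inverse (sqrt (1 - (a * sin \<theta>)^2))) (at (a * sin \<theta>))"
    using arcsin_scaled_sin_pos(1)[OF assms, of \<theta>]
    by (intro DERIV_arcsin) (auto simp: abs_square_less_1 abs_less_iff)
  from DERIV_chain2[OF this DERIV_cmult[OF DERIV_sin]] show ?thesis
    by (simp add: field_simps)
qed

lemma cos_power_integral_eq_J:
  fixes b :: real and n :: nat
  assumes b: "0 < b" "b < pi/2"
  shows "(LBINT \<phi>=-b..b. cos \<phi> ^ (2*n+1) / sqrt (cos \<phi> ^ 4 - cos b ^ 4)) = J n (sin b ^ 2)"
proof -
  define a where "a = sin b"
  have a: "0 < a" "a < 1"
    unfolding a_def using b sin_monotone_2pi[of b "pi/2"] by (auto intro: sin_gt_zero)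
  have e: "0 < a^2" "a^2 < 1" using a by (simp_all add: power_less_one_iff)
  have cos_b: "cos b ^ 4 = (1 - a^2)^2"
    unfolding a_def cos_squared_eq[symmetric] by (simp flip: power_mult)
  define f where "f = (\<lambda>\<phi>::real. cos \<phi> ^ (2*n+1) / sqrt (cos \<phi> ^ 4 - (1 - a^2)^2))"
  define g where "g = (\<lambda>\<theta>::real. arcsin (a * sin \<theta>))"
  define g' where "g' = (\<lambda>\<theta>::real. a * cos \<theta> / sqrt (1 - (a * sin \<theta>)^2))"
  define G where "G = (\<lambda>\<theta>::real. (1 - a^2 * sin \<theta>^2) ^ n / sqrt (2 - a^2 - a^2 * sin \<theta>^2))"
  note jac_pos = arcsin_scaled_sin_pos(1)[OF a]
  have g_deriv: "(g has_real_derivative g' \<theta>) (at \<theta>)" for \<theta>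
    unfolding g_def g'_def using a by (rule arcsin_scaled_sin_deriv)
  have g_cont: "isCont g \<theta>" for \<theta> using g_deriv by (rule DERIV_isCont)
  have g'_cont: "isCont g' \<theta>" for \<theta>
    using jac_pos[of \<theta>] unfolding g'_def by (intro continuous_intros) auto
  have f_cont: "isCont f (g \<theta>)" if "-pi/2 < \<theta>" "\<theta> < pi/2" for \<theta>
    using arcsin_scaled_sin_pos(3)[OF a that] unfolding f_def g_def by (intro continuous_intros) auto
  have f_nonneg: "0 \<le> f (g \<theta>)" if "-pi/2 < \<theta>" "\<theta> < pi/2" for \<theta>
    using arcsin_scaled_sin_pos(2)[OF a] arcsin_scaled_sin_pos(3)[OF a that]
    unfolding f_def g_def by simp
  have g'_nonneg: "0 \<le> g' \<theta>" if "-pi/2 \<le> \<theta>" "\<theta> \<le> pi/2" for \<theta>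
    unfolding g'_def using a cos_ge_zero[of \<theta>] that jac_pos[of \<theta>] by simp
  have g_left: "(g \<longlongrightarrow> -b) (at_right (-pi/2))" and g_right: "(g \<longlongrightarrow> b) (at_left (pi/2))"
    using g_cont[of "-pi/2"] g_cont[of "pi/2"] b
    unfolding g_def a_def by (auto simp: arcsin_sin arcsin_minus continuous_at filterlim_at_split)
  have pullback: "f (g \<theta>) * g' \<theta> = G \<theta>" if "-pi/2 < \<theta>" "\<theta> < pi/2" for \<theta>
    unfolding f_def g_def g'_def G_def using arcsin_substitution_integrand[OF a that] .
  have fg_integrable: "set_integrable lborel (einterval (-pi/2) (pi/2)) (\<lambda>\<theta>. f (g \<theta>) * g' \<theta>)"
    using J_interval_integral(1)[OF e, of n] unfolding G_def[symmetric]
    by (subst set_integrable_cong[OF refl refl]) (auto simp: pullback einterval_iff)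
  have "(LBINT \<phi>=-b..b. f \<phi>) = (LBINT \<theta>=-pi/2..pi/2. f (g \<theta>) * g' \<theta>)"
    by (rule interval_integral_substitution_nonneg(2)[where f=f and g=g and g'=g'])
       (use g_deriv f_cont g'_cont f_nonneg g'_nonneg fg_integrable g_left g_right
         in \<open>auto simp: ereal_tendsto_simps\<close>)
  also have "\<dots> = (LBINT \<theta>=-pi/2..pi/2. G \<theta>)"
    by (rule interval_integral_cong) (auto simp: pullback einterval_iff min_def max_def)
  also have "\<dots> = J n (a^2)"
    unfolding G_def by (rule J_interval_integral(2)[OF e])
  finally show ?thesis
    unfolding f_def cos_b a_def .
qed

(* Wallis recursion, from integrating (sin^(n+1) cos)' = (n+1) sin^n - (n+2) sin^(n+2). *)
lemma integral_sin_power_rec: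
  "integral {-(pi/2)..pi/2} (\<lambda>x. sin x ^ (n+2))
     = (n+1) / (n+2) * integral {-(pi/2)..pi/2} (\<lambda>x. sin x ^ n)"
proof -
  define F where "F = (\<lambda>x::real. sin x ^ Suc n * cos x)"
  define f where "f = (\<lambda>x::real. (n+1) * sin x ^ n - (n+2) * sin x ^ (n+2))"
  have "(F has_real_derivative f x) (at x)" for x
  proof -
    have "((\<lambda>x. sin x ^ Suc n) has_real_derivative (1 + real n) * (cos x * sin x ^ n)) (at x)"
      by (intro DERIV_power_Suc DERIV_sin)
    then have "(F has_real_derivative (1 + real n) * (cos x * sin x ^ n) * cos x
                 + (- sin x) * sin x ^ Suc n) (at x)"
      unfolding F_def by (rule DERIV_mult) (rule DERIV_cos)
    moreover have "(1 + real n) * (cos x * sin x ^ n) * cos x + (- sin x) * sin x ^ Suc n = f x"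
    proof -
      \<comment> \<open>the Pythagorean identity, with sin x ^ n abstracted to t\<close>
      have "(1 + r) * (c * t) * c - s * (s * t) = (1 + r) * t - (2 + r) * (s * (s * t))"
        if "c^2 = 1 - s^2" for r c s t :: real
        using that by algebra
      then show ?thesis unfolding f_def by (simp add: power_Suc cos_squared_eq)
    qed
    ultimately show ?thesis by simp
  qed
  then have "(f has_integral F (pi/2) - F (-(pi/2))) {-(pi/2)..pi/2}"
    by (intro fundamental_theorem_of_calculus)
       (auto simp: has_real_derivative_iff_has_vector_derivative has_vector_derivative_at_within)
  then have "integral {-(pi/2)..pi/2} f = 0" unfolding F_def by (simp add: integral_unique)
  moreover have "integral {-(pi/2)..pi/2} f = (n+1) * integral {-(pi/2)..pi/2} (\<lambda>x. sin x ^ n)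
                   - (n+2) * integral {-(pi/2)..pi/2} (\<lambda>x. sin x ^ (n+2))"
    unfolding f_def by (subst integral_diff) (auto intro!: integrable_continuous_interval continuous_intros)
  ultimately show ?thesis by (simp add: field_simps)
qed

lemma integral_sin_even_powers:
  "integral {-(pi/2)..pi/2} (\<lambda>x. sin x ^ 2) = pi/2"
  "integral {-(pi/2)..pi/2} (\<lambda>x. sin x ^ 4) = 3*pi/8"
  "integral {-(pi/2)..pi/2} (\<lambda>x. sin x ^ 6) = 5*pi/16"
  "integral {-(pi/2)..pi/2} (\<lambda>x. sin x ^ 8) = 35*pi/128"
  "integral {-(pi/2)..pi/2} (\<lambda>x. sin x ^ 10) = 63*pi/256"
proof -
  show s2: "integral {-(pi/2)..pi/2} (\<lambda>x. sin x ^ 2) = pi/2"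
    using integral_sin_power_rec[of 0] by (simp add: power2_eq_square)
  show s4: "integral {-(pi/2)..pi/2} (\<lambda>x. sin x ^ 4) = 3*pi/8"
    using integral_sin_power_rec[of 2] by (simp add: s2)
  show s6: "integral {-(pi/2)..pi/2} (\<lambda>x. sin x ^ 6) = 5*pi/16"
    using integral_sin_power_rec[of 4] by (simp add: s4)
  show s8: "integral {-(pi/2)..pi/2} (\<lambda>x. sin x ^ 8) = 35*pi/128"
    using integral_sin_power_rec[of 6] by (simp add: s6)
  show "integral {-(pi/2)..pi/2} (\<lambda>x. sin x ^ 10) = 63*pi/256"
    using integral_sin_power_rec[of 8] by (simp add: s8)
qed

lemma has_integral_poly_sin_sq:
  fixes f :: "real \<Rightarrow> real"
  assumes "\<And>x. f x = ca + cb * sin x ^ 2 + cc * sin x ^ 4 + cd * sin x ^ 6 + ce * sin x ^ 8 + cf * sin x ^ 10"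
    and "v = pi * (ca + cb/2 + 3*cc/8 + 5*cd/16 + 35*ce/128 + 63*cf/256)"
  shows "(f has_integral v) {-(pi/2)..pi/2}"
proof -
  have monomial: "((\<lambda>x. c * sin x ^ m) has_integral c * integral {-(pi/2)..pi/2} (\<lambda>x. sin x ^ m))
                {-(pi/2)..pi/2}" for c m
    by (intro has_integral_mult_right integrable_integral integrable_continuous_interval continuous_intros)
  have const: "((\<lambda>x. ca) has_integral ca * pi) {-(pi/2)..pi/2}"
    using has_integral_const_real[of ca "-(pi/2)" "pi/2"] by (simp add: algebra_simps)
  have "(f has_integral ca * pi + cb * (pi/2) + cc * (3*pi/8) + cd * (5*pi/16) + ce * (35*pi/128)
          + cf * (63*pi/256)) {-(pi/2)..pi/2}"
    unfolding assms(1)[abs_def]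
    using const monomial[of cb 2] monomial[of cc 4] monomial[of cd 6] monomial[of ce 8] monomial[of cf 10]
    unfolding integral_sin_even_powers by (intro has_integral_add) auto
  then show ?thesis unfolding assms(2) by (simp add: algebra_simps)
qed

(* Three-term AM-GM:  3 l^2 t <= l^3 + l^3 + t^3,  since the difference is (t-l)^2 (t+2l). *)
lemma cubic_amgm:
  fixes l t :: real
  assumes "0 \<le> l" "0 \<le> t"
  shows "3 * l^2 * t \<le> 2 * l^3 + t^3"
proof -
  have "0 \<le> (t - l)^2 * (t + 2*l)" using assms by simp
  also have "(t - l)^2 * (t + 2*l) = 2 * l^3 + t^3 - 3 * l^2 * t" by algebra
  finally show ?thesis by simp
qed

(* AM-GM with t = sqrt u * q, multiplied by w / sqrt u; this bounds the integrand w / sqrt u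
   of J 1 from below by polynomial quantities. *)
lemma cubic_amgm_weighted:
  fixes l w u q :: real
  assumes "0 < l" "0 \<le> w" "0 < u" "0 \<le> q"
  shows "3 * l^2 * (w * q) \<le> 2 * l^3 * (w / sqrt u) + w * u * q^3"
proof -
  have "w / sqrt u * (3 * l^2 * (sqrt u * q)) \<le> w / sqrt u * (2 * l^3 + (sqrt u * q)^3)"
    using assms by (intro mult_left_mono cubic_amgm) auto
  then show ?thesis using assms(3) by (simp add: field_simps power3_eq_cube)
qed

(* w^2 / (w + k) is convex in w, hence below its chord on [k, 1]. *)
lemma square_over_shift_le_chord:
  fixes k w :: real
  assumes "0 < k" "k \<le> w" "w \<le> 1"
  shows "w^2 / (w + k) \<le> k/2 + (2 + k) / (2 * (1 + k)) * (w - k)"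
proof -
  have "0 \<le> k * (w - k) * (1 - w)" using assms by simp
  also have "k * (w - k) * (1 - w) = (k * (1 + k) + (2 + k) * (w - k)) * (w + k) - 2 * (1 + k) * w^2"
    by algebra
  finally have "2 * (1 + k) * w^2 \<le> (k * (1 + k) + (2 + k) * (w - k)) * (w + k)" by simp
  then show ?thesis using assms by (simp add: field_simps)
qed

lemma quadratic_amgm_chord:
  fixes k w m :: real
  assumes "0 < k" "k \<le> w" "w \<le> 1"
  shows "2 * m * (w^2 / sqrt (w + k)) \<le> m^2 * w^2 + (k/2 + (2 + k) / (2 * (1 + k)) * (w - k))"
proof -
  have "w^2 * (2 * m * (1 / sqrt (w + k))) \<le> w^2 * (m^2 + (1 / sqrt (w + k))^2)"
    using sum_squares_bound[of m "1 / sqrt (w + k)"] by (intro mult_left_mono) auto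
  then have "2 * m * (w^2 / sqrt (w + k)) \<le> m^2 * w^2 + w^2 / (w + k)"
    using assms by (simp add: power_divide algebra_simps)
  also have "w^2 / (w + k) \<le> k/2 + (2 + k) / (2 * (1 + k)) * (w - k)"
    using assms by (rule square_over_shift_le_chord)
  finally show ?thesis by simp
qed

lemma lower_bound_from_cubic_family:
  fixes a c F :: real
  assumes "0 < a" "0 < c" and family: "\<And>l. 0 < l \<Longrightarrow> 3 * l^2 * a \<le> 2 * l^3 * F + c"
  shows "a^3 \<le> c * F^2"
proof -
  define l where "l = sqrt (c / a)"
  have l: "0 < l" "l^2 = c / a" unfolding l_def using assms by simp_all
  have "3 * c \<le> 2 * l^3 * F + c" using family[OF l(1)] l(2) assms(1) by (simp add: field_simps)
  moreover have "l^3 = l * (c / a)" using l(2) by (simp add: power3_eq_cube power2_eq_square)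
  ultimately have "c \<le> l * (c / a) * F" by simp
  then have "a \<le> l * F" using assms by (simp add: field_simps)
  then have "a^2 \<le> (l * F)^2" using assms(1) by (intro power_mono) auto
  then have "a * a^2 \<le> a * (l * F)^2" using assms(1) by (intro mult_left_mono) auto
  also have "a * (l * F)^2 = c * F^2" using l(2) assms(1) by (simp add: power_mult_distrib)
  finally show ?thesis by (simp add: power3_eq_cube power2_eq_square)
qed

lemma upper_bound_from_quadratic_family:
  fixes p q E :: real
  assumes "0 < p" "0 < q" "0 \<le> E" and family: "\<And>m. 0 < m \<Longrightarrow> 2 * m * E \<le> m^2 * p + q"
  shows "E^2 \<le> p * q"
proof -
  define m where "m = sqrt (q / p)"
  have m: "0 < m" "m^2 = q / p" unfolding m_def using assms by simp_all
  have "2 * m * E \<le> 2 * q" using family[OF m(1)] m(2) assms(1) by simp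
  then have "(m * E)^2 \<le> q^2" using m(1) assms(3) by (intro power_mono) auto
  then have "(m * E)^2 * p \<le> q^2 * p" using assms(1) by simp
  moreover have "(m * E)^2 * p = E^2 * (m^2 * p)" by (simp add: power_mult_distrib mult_ac)
  moreover have "m^2 * p = q" using m(2) assms(1) by simp
  ultimately have "E^2 * q \<le> (p * q) * q" by (simp add: power2_eq_square mult_ac)
  then show ?thesis using assms(2) by simp
qed

(* Positivity of 256 C(e), the polynomial occurring in the lower bound for J 1, via its
   Bernstein form on [0, 1]. *)
lemma polynomial_C_pos:
  fixes e :: real
  assumes "0 < e" "e < 1"
  shows "0 < 512 + 128*e - 448*e^2 - 320*e^3 + 160*e^4 + 133*e^5"
proof -
  have "512 + 128*e - 448*e^2 - 320*e^3 + 160*e^4 + 133*e^5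
        = 512*(1-e)^5 + 2688*e*(1-e)^4 + 5184*e^2*(1-e)^3 + 4224*e^3*(1-e)^2 + 1248*e^4*(1-e) + 165*e^5"
    by algebra
  also have "0 < \<dots>"
    using assms by (intro add_nonneg_pos add_nonneg_nonneg mult_nonneg_nonneg zero_le_power mult_pos_pos) auto
  finally show ?thesis .
qed

(* The final polynomial inequality P B C^3 < 4 A^9 on (0, 1): after clearing denominators
   the difference equals e times a polynomial with positive Bernstein coefficients. *)
lemma key_polynomial_inequality:
  fixes e :: real
  assumes e: "0 < e" "e < 1"
  shows "(1 - e + 3*e^2/8) * ((4 - 3*e + e^2) / (4*(2-e)))
           * ((512 + 128*e - 448*e^2 - 320*e^3 + 160*e^4 + 133*e^5) / 256)^3
         < 4 * (1 - 3*e^2/8)^9"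
proof -
  define c where "c = 512 + 128*e - 448*e^2 - 320*e^3 + 160*e^4 + 133*e^5"
  have "16*(2-e)*(8-3*e^2)^9 - (8 - 8*e + 3*e^2)*(4-3*e+e^2)*c^3
     = e * (2147483648 * (1-e)^18 + 34359738368 * e * (1-e)^17 + 255953207296 * e^2 * (1-e)^16
       + 1179119517696 * e^3 * (1-e)^15 + 3762341019648 * e^4 * (1-e)^14 + 8821527281664 * e^5 * (1-e)^13
       + 15728075341824 * e^6 * (1-e)^12 + 21757832331264 * e^7 * (1-e)^11 + 23615174279168 * e^8 * (1-e)^10
       + 20202687791104 * e^9 * (1-e)^9 + 13614569938944 * e^10 * (1-e)^8 + 7187153372160 * e^11 * (1-e)^7
       + 2939162644992 * e^12 * (1-e)^6 + 914202059904 * e^13 * (1-e)^5 + 210160384800 * e^14 * (1-e)^4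
       + 34110521688 * e^15 * (1-e)^3 + 3608935020 * e^16 * (1-e)^2 + 211661725 * e^17 * (1-e)
       + 4297250 * e^18)"
    unfolding c_def by algebra
  also have "0 < \<dots>"
    using e by (intro mult_pos_pos add_pos_nonneg mult_nonneg_nonneg zero_le_power) auto
  finally have "(8 - 8*e + 3*e^2) * (4-3*e+e^2) * c^3 < 16*(2-e)*(8-3*e^2)^9" by simp
  then show ?thesis
    using e unfolding c_def[symmetric]
    by (simp add: field_simps power_divide power_mult_distrib)
qed

lemma J_nonneg:
  fixes e :: real
  assumes "0 < e" "e < 1"
  shows "0 \<le> J n e"
proof (rule has_integral_nonneg[OF J_has_integral[OF assms]])
  fix \<theta> :: real
  have "0 \<le> 1 - e * sin \<theta>^2" using weight_bounds(1)[OF assms, of \<theta>] assms by linarith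
  then show "0 \<le> (1 - e * sin \<theta>^2) ^ n / sqrt (2 - e - e * sin \<theta>^2)"
    using weight_bounds(3)[OF assms, of \<theta>] by (intro divide_nonneg_pos zero_le_power) auto
qed

lemma J1_lower_bound:
  fixes e :: real
  assumes e: "0 < e" "e < 1"
  shows "pi^2 * (1 - 3*e^2/8)^3
           \<le> (512 + 128*e - 448*e^2 - 320*e^3 + 160*e^4 + 133*e^5) / 256 * J 1 e ^ 2"
proof -
  define S where "S = {-(pi/2)..pi/2::real}"
  define W where "W = (\<lambda>x::real. 1 - e * sin x^2)"
  define U where "U = (\<lambda>x::real. 2 - e - e * sin x^2)"
  define q where "q = (\<lambda>x::real. 1 + e * sin x^2)"
  define A where "A = 1 - 3*e^2/8"
  define C where "C = (512 + 128*e - 448*e^2 - 320*e^3 + 160*e^4 + 133*e^5) / 256"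
  have W: "0 \<le> W x" for x using weight_bounds(1)[OF e, of x] e unfolding W_def by linarith
  have U: "0 < U x" for x using weight_bounds(3)[OF e, of x] unfolding U_def .
  have q: "0 \<le> q x" for x using e unfolding q_def by simp
  have int_Wq: "((\<lambda>x. W x * q x) has_integral pi * A) S"
    unfolding S_def
    by (rule has_integral_poly_sin_sq[where ca=1 and cb=0 and cc="-(e^2)" and cd=0 and ce=0 and cf=0])
       (simp_all add: W_def q_def A_def algebra_simps power2_eq_square power4_eq_xxxx)
  have int_WUq3: "((\<lambda>x. W x * U x * q x ^ 3) has_integral pi * C) S"
    unfolding S_def
    by (rule has_integral_poly_sin_sq[where ca="2-e" and cb="3*e-2*e^2" and cc="-2*e^2"
          and cd="-4*e^3+2*e^4" and ce="e^5" and cf="e^5"])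
       (unfold W_def U_def q_def C_def; algebra)+
  have int_J1: "((\<lambda>x. W x / sqrt (U x)) has_integral J 1 e) S"
    using J_has_integral[OF e, of 1] unfolding S_def W_def U_def by simp
  have family: "3 * l^2 * (pi * A) \<le> 2 * l^3 * J 1 e + pi * C" if l: "0 < l" for l
  proof (rule has_integral_le[OF has_integral_mult_right[OF int_Wq]
        has_integral_add[OF has_integral_mult_right[OF int_J1] int_WUq3]])
    fix x
    show "3 * l^2 * (W x * q x) \<le> 2 * l^3 * (W x / sqrt (U x)) + W x * U x * q x ^ 3"
      using cubic_amgm_weighted[OF l W U q] .
  qed
  have "e^2 < 1" using e by (simp add: power_less_one_iff)
  then have "0 < A" unfolding A_def by simp
  moreover have "0 < C" unfolding C_def using polynomial_C_pos[OF e] by simp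
  ultimately have "(pi * A)^3 \<le> pi * C * J 1 e ^ 2"
    by (intro lower_bound_from_cubic_family family) auto
  then show ?thesis
    unfolding A_def[symmetric] C_def[symmetric] by (simp add: power3_eq_cube power2_eq_square mult_ac)
qed

lemma J2_upper_bound:
  fixes e :: real
  assumes e: "0 < e" "e < 1"
  shows "J 2 e ^ 2 \<le> pi^2 * (1 - e + 3*e^2/8) * ((4 - 3*e + e^2) / (4*(2-e)))"
proof -
  define S where "S = {-(pi/2)..pi/2::real}"
  define k where "k = 1 - e"
  define W where "W = (\<lambda>x::real. 1 - e * sin x^2)"
  define U where "U = (\<lambda>x::real. 2 - e - e * sin x^2)"
  define \<sigma> where "\<sigma> = (2 + k) / (2 * (1 + k))"
  define chord where "chord = (\<lambda>w::real. k/2 + \<sigma> * (w - k))"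
  define P where "P = 1 - e + 3*e^2/8"
  define B where "B = (4 - 3*e + e^2) / (4*(2-e))"
  have k: "0 < k" unfolding k_def using e by simp
  have B: "B = k/2 + \<sigma> * e / 2"
    unfolding B_def \<sigma>_def k_def using e by (simp add: field_simps power2_eq_square)
  have W: "k \<le> W x" "W x \<le> 1" for x using weight_bounds[OF e, of x] unfolding k_def W_def by auto
  have U: "U x = W x + k" for x unfolding U_def W_def k_def by simp
  have int_W2: "((\<lambda>x. W x ^ 2) has_integral pi * P) S"
    unfolding S_def
    by (rule has_integral_poly_sin_sq[where ca=1 and cb="-2*e" and cc="e^2" and cd=0 and ce=0 and cf=0])
       (unfold W_def P_def; algebra)+
  have int_chord: "((\<lambda>x. chord (W x)) has_integral pi * B) S"
    unfolding S_def
    by (rule has_integral_poly_sin_sq[where ca="k/2 + \<sigma> * e" and cb="- \<sigma> * e"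
          and cc=0 and cd=0 and ce=0 and cf=0])
       (simp_all add: chord_def W_def B k_def algebra_simps)
  have int_J2: "((\<lambda>x. W x ^ 2 / sqrt (U x)) has_integral J 2 e) S"
    using J_has_integral[OF e, of 2] unfolding S_def W_def U_def by simp
  have family: "2 * m * J 2 e \<le> m^2 * (pi * P) + pi * B" for m
  proof (rule has_integral_le[OF has_integral_mult_right[OF int_J2]
        has_integral_add[OF has_integral_mult_right[OF int_W2] int_chord]])
    fix x
    show "2 * m * (W x ^ 2 / sqrt (U x)) \<le> m^2 * W x ^ 2 + chord (W x)"
      unfolding U chord_def \<sigma>_def using k W[of x] by (rule quadratic_amgm_chord)
  qed
  have "0 < P" unfolding P_def using e zero_le_power2[of e] by linarith
  moreover have "0 < B" unfolding B \<sigma>_def using k e by (intro add_pos_nonneg) auto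
  ultimately have "J 2 e ^ 2 \<le> pi * P * (pi * B)"
    by (intro upper_bound_from_quadratic_family family J_nonneg[OF e]) auto
  then show ?thesis unfolding P_def B_def by (simp add: power2_eq_square mult_ac)
qed

lemma J_ratio_lt_two:
  fixes e :: real
  assumes e: "0 < e" "e < 1"
  shows "pi^2 * J 2 e / J 1 e ^ 3 < 2"
proof -
  define A where "A = 1 - 3*e^2/8"
  define B where "B = (4 - 3*e + e^2) / (4*(2-e))"
  define C where "C = (512 + 128*e - 448*e^2 - 320*e^3 + 160*e^4 + 133*e^5) / 256"
  define P where "P = 1 - e + 3*e^2/8"
  define E where "E = J 2 e"
  define F where "F = J 1 e"
  have lower: "pi^2 * A^3 \<le> C * F^2"
    using J1_lower_bound[OF e] unfolding A_def C_def F_def .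
  have upper: "E^2 \<le> pi^2 * P * B"
    using J2_upper_bound[OF e] unfolding P_def B_def E_def .
  have poly: "P * B * C^3 < 4 * A^9"
    using key_polynomial_inequality[OF e] unfolding P_def B_def C_def A_def .
  have "0 < C" unfolding C_def using polynomial_C_pos[OF e] by simp
  have "e^2 < 1" using e by (simp add: power_less_one_iff)
  then have "0 < pi^2 * A^3" unfolding A_def by simp
  then have "F \<noteq> 0" using lower by auto
  then have F: "0 < F" using J_nonneg[OF e, of 1] unfolding F_def by linarith
  have "(pi^2 * E)^2 * C^3 = pi^4 * E^2 * C^3" by algebra
  also have "\<dots> \<le> pi^4 * (pi^2 * P * B) * C^3"
    using upper \<open>0 < C\<close> by (intro mult_right_mono mult_left_mono) auto
  also have "\<dots> = pi^6 * (P * B * C^3)" by algebra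
  also have "\<dots> < pi^6 * (4 * A^9)" using poly by simp
  also have "\<dots> = 4 * (pi^2 * A^3)^3" by algebra
  also have "\<dots> \<le> 4 * (C * F^2)^3"
    using lower \<open>0 < pi^2 * A^3\<close> by (intro mult_left_mono power_mono) auto
  also have "\<dots> = (2 * F^3)^2 * C^3" by algebra
  finally have "(pi^2 * E)^2 < (2 * F^3)^2" using \<open>0 < C\<close> by simp
  then have "pi^2 * E < 2 * F^3" by (rule power_less_imp_less_base) (use F in simp)
  then show ?thesis unfolding E_def[symmetric] F_def[symmetric] using F by (simp add: divide_less_eq)
qed

theorem proposition14:
  fixes b :: real
  assumes "0 < b" and "b < pi / 2"
  shows "pi ^ 2 * I1 b / I2 b ^ 3 < 2"
proof -
  have "0 < sin b" "sin b < 1"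
    using assms sin_monotone_2pi[of b "pi/2"] by (auto intro: sin_gt_zero)
  then have e: "0 < sin b ^ 2" "sin b ^ 2 < 1" by (simp_all add: power_less_one_iff)
  have "I1 b = J 2 (sin b ^ 2)"
    using cos_power_integral_eq_J[OF assms, of 2] unfolding I1_def by simp
  moreover have "I2 b = J 1 (sin b ^ 2)"
    using cos_power_integral_eq_J[OF assms, of 1] unfolding I2_def by simp
  ultimately show ?thesis using J_ratio_lt_two[OF e] by simp
qed

end
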